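(* Consider the path graph on $n$ nodes with Laplacian $L_n$ and a set of control (observation) nodes $I_o=\{i_1<i_2<\dots<i_m\}\subset\{1,\dots,n\}$. The path is reachable (observable) from $I_o$ if and only if the matrices $N_{i_1-1}, M_{i_2-i_1-1},\dots,M_{i_m-i_{m-1}-1}, N_{n-i_m}$ do not have a common eigenvalue (an eigenvalue shared by all of them). The eigenvalues common to all these matrices are exactly the unreachable (unobservable) eigenvalues of $L_n$ from $I_o$.
   Context: The path graph on nodes $\{1,\dots,n\}$ has edges $\{i,i+1\}$; $L_n$ is tridiagonal with diagonal $(1,2,\dots,2,1)$ and off-diagonal $-1$. With $B=[e_{i_1}|\cdots|e_{i_m}]$, reachable from $I_o$ means $(L_n,B)$ is reachable, observable means $(L_n,B^T)$ is observable. An unreachable (unobservable) eigenvalue is $\lambda$ such that some $v\ne0$ satisfies $L_nv=\lambda v$ and $(v)_j=0$ for all $j\in I_o$. $N_\nu$ ($\nu\times\nu$) is tridiagonal with diagonal $(1,2,\dots,2)$ and off-diagonal $-1$; $M_\mu$ ($\mu\times\mu$) is tridiagonal with diagonal all $2$ and off-diagonal $-1$. A matrix of size $0\times0$ is regarded as having no eigenvalues. *)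

theory Defs
  imports "Jordan_Normal_Form.DL_Rank" "Jordan_Normal_Form.Char_Poly"
begin

(* All matrices are 0-indexed (Jordan_Normal_Form); node j in {1..n} of the paper
   corresponds to row/column index j - 1. *)

definition path_laplacian :: "nat \<Rightarrow> real mat" where
  "path_laplacian n = mat n n (\<lambda>(i,j).
     if i = j then (if 0 < i then 1 else 0) + (if i + 1 < n then 1 else 0)
     else if i + 1 = j \<or> j + 1 = i then -1 else 0)"

definition N_mat :: "nat \<Rightarrow> real mat" where
  "N_mat \<nu> = mat \<nu> \<nu> (\<lambda>(i,j).
     if i = j then (if i = 0 then 1 else 2)
     else if i + 1 = j \<or> j + 1 = i then -1 else 0)"

definition M_mat :: "nat \<Rightarrow> real mat" where
  "M_mat \<mu> = mat \<mu> \<mu> (\<lambda>(i,j).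
     if i = j then 2
     else if i + 1 = j \<or> j + 1 = i then -1 else 0)"

definition input_mat :: "nat \<Rightarrow> nat list \<Rightarrow> real mat" where
  "input_mat n is = mat n (length is) (\<lambda>(i,k). if i = is ! k - 1 then 1 else 0)"

(* Kalman controllability matrix [B, AB, ..., A^(n-1) B] *)
definition ctrb_mat :: "real mat \<Rightarrow> real mat \<Rightarrow> real mat" where
  "ctrb_mat A B = mat (dim_row A) (dim_row A * dim_col B)
     (\<lambda>(i,j). (A ^\<^sub>m (j div dim_col B) * B) $$ (i, j mod dim_col B))"

(* Kalman observability matrix [C; CA; ...; C A^(n-1)] *)
definition obsv_mat :: "real mat \<Rightarrow> real mat \<Rightarrow> real mat" where
  "obsv_mat A C = mat (dim_row C * dim_col A) (dim_col A)
     (\<lambda>(i,j). (C * A ^\<^sub>m (i div dim_row C)) $$ (i mod dim_row C, j))"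

definition reachable :: "real mat \<Rightarrow> real mat \<Rightarrow> bool" where
  "reachable A B \<longleftrightarrow> vec_space.rank (dim_row A) (ctrb_mat A B) = dim_row A"

definition observable :: "real mat \<Rightarrow> real mat \<Rightarrow> bool" where
  "observable A C \<longleftrightarrow>
     vec_space.rank (dim_row (obsv_mat A C)) (obsv_mat A C) = dim_col A"

definition unreachable_eigenvalue :: "nat \<Rightarrow> nat set \<Rightarrow> real \<Rightarrow> bool" where
  "unreachable_eigenvalue n Io x \<longleftrightarrow>
     (\<exists>v. eigenvector (path_laplacian n) v x \<and> (\<forall>j\<in>Io. v $ (j - 1) = 0))"

definition common_eigenvalue :: "nat \<Rightarrow> nat list \<Rightarrow> real \<Rightarrow> bool" where
  "common_eigenvalue n is x \<longleftrightarrow>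
     eigenvalue (N_mat (hd is - 1)) x \<and>
     (\<forall>k. k + 1 < length is \<longrightarrow> eigenvalue (M_mat (is ! (k+1) - is ! k - 1)) x) \<and>
     eigenvalue (N_mat (n - last is)) x"

end

theory Submission
  imports Defs
begin

text \<open>An eigenvector of a tridiagonal second-difference matrix is determined by its first entry
  through a three-term recurrence, so it is a multiple of a Chebyshev-type vector, and the
  eigenvalues of \<open>L\<^sub>n\<close>, \<open>N\<^sub>\<nu>\<close> and \<open>M\<^sub>\<mu>\<close> are the roots of the corresponding boundary conditions.
  A nonzero solution of the recurrence never vanishes at two consecutive indices, so an
  eigenvector of \<open>L\<^sub>n\<close> that vanishes at node \<open>i\<^sub>k\<close> restarts there as a chain with a clamped end:
  it vanishes at \<open>i\<^sub>k\<^sub>+\<^sub>1\<close> iff the eigenvalue is one of \<open>M\<^bsub>i\<^sub>k\<^sub>+\<^sub>1 - i\<^sub>k - 1\<^esub>\<close>, and it meets the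
  free end at node \<open>n\<close> iff the eigenvalue is one of \<open>N\<^bsub>n - i\<^sub>m\<^esub>\<close>. Hence the common eigenvalues are
  exactly the eigenvalues of \<open>L\<^sub>n\<close> with an eigenvector vanishing on \<open>I\<^sub>o\<close>.

  Since \<open>L\<^sub>n\<close> is symmetric, the controllability matrix is the transpose of the observability
  matrix, and both Kalman rank conditions say that no \<open>u \<noteq> 0\<close> has \<open>B\<^sup>T L\<^sub>n\<^sup>j u = 0\<close> for all
  \<open>j < n\<close>. The eigenvalues \<open>2 - 2 cos (k\<pi>/n)\<close> of \<open>L\<^sub>n\<close> are distinct, and filtering such a \<open>u\<close>
  through \<open>\<Prod>\<^sub>l\<^sub>\<noteq>\<^sub>k (L\<^sub>n - \<lambda>\<^sub>l)\<close> yields an eigenvector vanishing on \<open>I\<^sub>o\<close> (the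
  Popov-Belevitch-Hautus test).\<close>

section \<open>Rank and kernels\<close>

lemma mult_unit_vec_eq_col:
  fixes A :: "'a :: semiring_1 mat"
  assumes "A \<in> carrier_mat r c" "i < c"
  shows "A *\<^sub>v unit_vec c i = col A i"
  by (rule eq_vecI) (use assms in auto)

lemma distinct_cols_if_trivial_kernel:
  fixes A :: "'a :: ring_1 mat"
  assumes A: "A \<in> carrier_mat n c"
    and ker: "\<And>v. v \<in> carrier_vec c \<Longrightarrow> A *\<^sub>v v = 0\<^sub>v n \<Longrightarrow> v = 0\<^sub>v c"
  shows "distinct (cols A)"
proof (rule ccontr)
  assume "\<not> distinct (cols A)"
  then obtain i j where ij: "i < c" "j < c" "i \<noteq> j" "col A i = col A j"
    using A unfolding distinct_conv_nth by auto
  let ?v = "unit_vec c i - unit_vec c j :: 'a vec"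
  have "A *\<^sub>v ?v = col A i - col A j"
    using A ij(1,2) by (simp add: mult_minus_distrib_mat_vec[OF A] mult_unit_vec_eq_col)
  also have "\<dots> = 0\<^sub>v n" using A ij(4) by (auto simp: vec_eq_iff)
  finally have "?v = 0\<^sub>v c" by (intro ker) auto
  then have "?v $ i = 0" using ij(1) by simp
  then show False using ij by simp
qed

lemma exists_orthogonal_nonzero:
  fixes S :: "'a :: field vec set"
  assumes "S \<subseteq> carrier_vec n" "finite S" "card S < n"
  shows "\<exists>v\<in>carrier_vec n. v \<noteq> 0\<^sub>v n \<and> (\<forall>s\<in>S. s \<bullet> v = 0)"
proof -
  txt \<open>The elements of \<open>S\<close> padded with zero rows form a singular square matrix; a kernel vector
    of it is orthogonal to \<open>S\<close>.\<close>
  obtain ss where ss: "set ss = S" "distinct ss" using finite_distinct_list[OF assms(2)] by blast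
  have len: "length ss < n" using ss assms(3) distinct_card by fastforce
  define c where "c i = (if i < length ss then ss ! i else 0\<^sub>v n)" for i
  define P where "P = mat\<^sub>r n n (\<lambda>i. if i = n - 1 then 0\<^sub>v n else c i)"
  have "ss ! i \<in> carrier_vec n" if "i < length ss" for i using that assms(1) ss(1) nth_mem by blast
  then have c: "c \<in> {0..<n} \<rightarrow> carrier_vec n" by (simp add: c_def)
  have P: "P \<in> carrier_mat n n" by (simp add: P_def)
  have "det P = 0" unfolding P_def by (rule det_row_0[OF _ c]) (use len in simp)
  then obtain v where v: "v \<in> carrier_vec n" "v \<noteq> 0\<^sub>v n" "P *\<^sub>v v = 0\<^sub>v n"
    using det_0_iff_vec_prod_zero_field[OF P] by blast
  have "s \<bullet> v = 0" if sS: "s \<in> S" for s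
  proof -
    obtain i where i: "i < length ss" "s = ss ! i" using sS ss(1) by (auto simp: in_set_conv_nth)
    have s: "s \<in> carrier_vec n" using sS assms(1) by blast
    have "i \<noteq> n - 1" using i(1) len by simp
    then have "row P i = s" using i len s by (simp add: P_def c_def)
    moreover have "(P *\<^sub>v v) $ i = row P i \<bullet> v" using i(1) len P by auto
    ultimately show ?thesis using v(3) i(1) len by simp
  qed
  then show ?thesis using v(1,2) by blast
qed

context vec_space
begin

lemma maximal_indpt_cols_exists: "\<exists>S. maximal S (\<lambda>T. T \<subseteq> set (cols A) \<and> lin_indpt T)"
  using maximal_exists[of "\<lambda>T. T \<subseteq> set (cols A) \<and> lin_indpt T" "card (set (cols A))" "{}"]
  by (meson List.finite_set card_mono empty_iff empty_subsetI finite_lin_indpt2 rev_finite_subset)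

lemma cols_subset_span_maximal_indpt:
  assumes A: "A \<in> carrier_mat n c" and S: "maximal S (\<lambda>T. T \<subseteq> set (cols A) \<and> lin_indpt T)"
  shows "set (cols A) \<subseteq> span S"
proof
  fix a assume a: "a \<in> set (cols A)"
  have cols: "set (cols A) \<subseteq> carrier_vec n" using A by (auto simp: cols_def)
  have Sc: "S \<subseteq> carrier_vec n" and li: "lin_indpt S" using S cols by (auto simp: maximal_def)
  show "a \<in> span S"
  proof (cases "a \<in> S")
    case False
    then have "\<not> lin_indpt (insert a S)" using S a unfolding maximal_def by blast
    then show ?thesis using lin_dep_iff_in_span[OF Sc li _ False] a cols by auto
  qed (use in_own_span[OF Sc] in blast)
qed

lemma rank_le_card_cols:
  assumes "A \<in> carrier_mat n nc"
  shows "rank A \<le> card (set (cols A))"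
proof -
  obtain S where S: "maximal S (\<lambda>T. T \<subseteq> set (cols A) \<and> lin_indpt T)"
    using maximal_indpt_cols_exists by blast
  then have "card S \<le> card (set (cols A))" by (simp add: card_mono maximal_def)
  then show ?thesis using rank_card_indpt[OF assms S] by simp
qed

lemma rank_eq_dim_col_iff:
  assumes A: "A \<in> carrier_mat n c"
  shows "rank A = c \<longleftrightarrow> (\<forall>v\<in>carrier_vec c. A *\<^sub>v v = 0\<^sub>v n \<longrightarrow> v = 0\<^sub>v c)"
proof
  assume rank: "rank A = c"
  have "distinct (cols A)"
  proof (rule ccontr)
    assume "\<not> distinct (cols A)"
    then have "card (set (cols A)) < c" using A card_distinct[of "cols A"] card_length[of "cols A"]
      by (auto intro: le_neq_implies_less)
    then show False using rank_le_card_cols[OF A] rank by simp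
  qed
  then show "\<forall>v\<in>carrier_vec c. A *\<^sub>v v = 0\<^sub>v n \<longrightarrow> v = 0\<^sub>v c"
    using lin_depI[OF A] full_rank_lin_indpt[OF A rank] by blast
next
  assume ker: "\<forall>v\<in>carrier_vec c. A *\<^sub>v v = 0\<^sub>v n \<longrightarrow> v = 0\<^sub>v c"
  then have dist: "distinct (cols A)" using distinct_cols_if_trivial_kernel[OF A] by blast
  then have "lin_indpt (set (cols A))" using ker lin_depE[OF A _ dist] by metis
  then show "rank A = c" using lin_indpt_full_rank[OF A dist] by blast
qed

text \<open>The kernel of \<open>B\<^sup>T\<close> is the orthogonal complement of the column space of \<open>B\<close>; over an
  anisotropic scalar product it is trivial exactly when the columns span everything.\<close>

lemma rank_eq_dim_row_iff:
  assumes B: "B \<in> carrier_mat n c"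
    and anisotropic: "\<And>u :: 'a vec. u \<in> carrier_vec n \<Longrightarrow> u \<bullet> u = 0 \<Longrightarrow> u = 0\<^sub>v n"
  shows "rank B = n \<longleftrightarrow> (\<forall>u\<in>carrier_vec n. transpose_mat B *\<^sub>v u = 0\<^sub>v c \<longrightarrow> u = 0\<^sub>v n)"
proof -
  obtain S where S: "maximal S (\<lambda>T. T \<subseteq> set (cols B) \<and> lin_indpt T)"
    using maximal_indpt_cols_exists by blast
  have cols: "set (cols B) \<subseteq> carrier_vec n" using B by (auto simp: cols_def)
  have S_cols: "S \<subseteq> set (cols B)" and li: "lin_indpt S" using S by (auto simp: maximal_def)
  have Sc: "S \<subseteq> carrier_vec n" and fin: "finite S" using S_cols cols finite_subset by auto
  have rank: "rank B = card S" using rank_card_indpt[OF B S] .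
  have ker: "transpose_mat B *\<^sub>v u = 0\<^sub>v c \<longleftrightarrow> u \<in> orthogonal_complement (span S)"
    if u: "u \<in> carrier_vec n" for u
  proof -
    have "transpose_mat B *\<^sub>v u = 0\<^sub>v c \<longleftrightarrow> (\<forall>b\<in>set (cols B). u \<bullet> b = 0)"
      using B u by (auto simp: vec_eq_iff cols_def comm_scalar_prod[of _ n])
    then show ?thesis
      using in_orthogonal_complement_span[OF Sc] cols_subset_span_maximal_indpt[OF B S] S_cols u
      unfolding orthogonal_complement_def by blast
  qed
  show ?thesis
  proof
    assume "rank B = n"
    then have "basis S" using dim_li_is_basis[OF fin_dim fin Sc li] rank dim_is_n by simp
    then have span: "span S = carrier_vec n" by (simp add: basis_def)
    show "\<forall>u\<in>carrier_vec n. transpose_mat B *\<^sub>v u = 0\<^sub>v c \<longrightarrow> u = 0\<^sub>v n"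
    proof (intro ballI impI)
      fix u assume "u \<in> carrier_vec n" "transpose_mat B *\<^sub>v u = 0\<^sub>v c"
      then have "u \<in> carrier_vec n" "u \<bullet> u = 0"
        using ker span unfolding orthogonal_complement_def by auto
      then show "u = 0\<^sub>v n" by (rule anisotropic)
    qed
  next
    assume ker_trivial: "\<forall>u\<in>carrier_vec n. transpose_mat B *\<^sub>v u = 0\<^sub>v c \<longrightarrow> u = 0\<^sub>v n"
    show "rank B = n"
    proof (rule ccontr)
      assume "rank B \<noteq> n"
      moreover have "card S \<le> n" using li_le_dim(2)[OF fin_dim Sc li] dim_is_n by simp
      ultimately obtain v where v: "v \<in> carrier_vec n" "v \<noteq> 0\<^sub>v n" "\<forall>s\<in>S. s \<bullet> v = 0"
        using exists_orthogonal_nonzero[OF Sc fin] rank by fastforce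
      then have "v \<in> orthogonal_complement S"
        using Sc comm_scalar_prod[OF v(1)] unfolding orthogonal_complement_def by auto
      then show False
        using ker[OF v(1)] ker_trivial v(1,2) in_orthogonal_complement_span[OF Sc] by simp
    qed
  qed
qed
end

lemma real_scalar_prod_self_eq_0:
  "(u :: real vec) \<in> carrier_vec n \<Longrightarrow> u \<bullet> u = 0 \<Longrightarrow> u = 0\<^sub>v n"
  using conjugate_square_eq_0_vec[of u n] by simp

section \<open>Krylov subspaces of a symmetric matrix with an eigenbasis\<close>

lemma symmetric_eigenvectors_orthogonal:
  fixes A :: "'a :: idom mat"
  assumes A: "A \<in> carrier_mat n n" "transpose_mat A = A"
    and v: "eigenvector A v x" and w: "eigenvector A w y" and "x \<noteq> y"
  shows "v \<bullet> w = 0"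
proof -
  have vw: "v \<in> carrier_vec n" "w \<in> carrier_vec n" and Av: "A *\<^sub>v v = x \<cdot>\<^sub>v v"
    and Aw: "A *\<^sub>v w = y \<cdot>\<^sub>v w"
    using v w A(1) unfolding eigenvector_def by auto
  have "x * (v \<bullet> w) = (A *\<^sub>v v) \<bullet> w" using vw by (simp add: Av)
  also have "\<dots> = v \<bullet> (A *\<^sub>v w)"
    using transpose_vec_mult_scalar[OF A(1) vw(2,1)] A(2) by simp
  also have "\<dots> = y * (v \<bullet> w)" using vw by (simp add: Aw)
  finally have "(x - y) * (v \<bullet> w) = 0" by (simp add: algebra_simps)
  then show ?thesis using assms(5) by simp
qed

definition krylov_zero_on :: "'a :: semiring_1 mat \<Rightarrow> nat set \<Rightarrow> nat \<Rightarrow> 'a vec \<Rightarrow> bool" where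
  "krylov_zero_on A P d u \<longleftrightarrow> (\<forall>j<d. \<forall>p\<in>P. (A ^\<^sub>m j *\<^sub>v u) $ p = 0)"

lemma krylov_zero_on_eigenvector:
  assumes "A \<in> carrier_mat n n" "eigenvector A v x" "P \<subseteq> {..<n}" "\<forall>p\<in>P. v $ p = 0"
  shows "krylov_zero_on A P d v"
  using assms eigenvector_pow[OF assms(1,2)] unfolding krylov_zero_on_def eigenvector_def
  by auto

fun shift_prod_vec :: "'a :: comm_ring_1 mat \<Rightarrow> 'a list \<Rightarrow> 'a vec \<Rightarrow> 'a vec" where
  "shift_prod_vec A [] u = u"
| "shift_prod_vec A (\<mu> # ms) u = A *\<^sub>v shift_prod_vec A ms u - \<mu> \<cdot>\<^sub>v shift_prod_vec A ms u"

lemma shift_prod_vec_carrier: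
  "A \<in> carrier_mat n n \<Longrightarrow> u \<in> carrier_vec n \<Longrightarrow> shift_prod_vec A ms u \<in> carrier_vec n"
  by (induction ms) auto

lemma krylov_zero_on_shift_prod_vec:
  fixes A :: "'a :: field mat"
  assumes A: "A \<in> carrier_mat n n" and u: "u \<in> carrier_vec n" and P: "P \<subseteq> {..<n}"
  shows "krylov_zero_on A P (d + length ms) u \<Longrightarrow> krylov_zero_on A P d (shift_prod_vec A ms u)"
proof (induction ms arbitrary: d)
  case (Cons \<mu> ms)
  let ?y = "shift_prod_vec A ms u"
  have y: "?y \<in> carrier_vec n" using shift_prod_vec_carrier[OF A u] .
  have IH: "krylov_zero_on A P (Suc d) ?y" using Cons by simp
  show ?case unfolding krylov_zero_on_def
  proof (intro allI impI ballI)
    fix j p assume j: "j < d" and p: "p \<in> P"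
    have Aj: "A ^\<^sub>m j \<in> carrier_mat n n" using A by simp
    have eq: "A ^\<^sub>m j *\<^sub>v shift_prod_vec A (\<mu> # ms) u
        = A ^\<^sub>m Suc j *\<^sub>v ?y - \<mu> \<cdot>\<^sub>v (A ^\<^sub>m j *\<^sub>v ?y)"
      using A y mult_mat_vec[OF Aj y]
      by (simp add: mult_minus_distrib_mat_vec[OF Aj] assoc_mult_mat_vec[OF Aj A])
    have "(A ^\<^sub>m Suc j *\<^sub>v ?y) $ p = 0" "(A ^\<^sub>m j *\<^sub>v ?y) $ p = 0"
      using IH j p unfolding krylov_zero_on_def by auto
    then show "(A ^\<^sub>m j *\<^sub>v shift_prod_vec A (\<mu> # ms) u) $ p = 0"
      unfolding eq using p P A by (auto simp del: pow_mat.simps)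
  qed
qed simp

locale real_symmetric_eigenbasis =
  fixes A :: "real mat" and n :: nat and w :: "nat \<Rightarrow> real vec" and ev :: "nat \<Rightarrow> real"
  assumes A_carrier: "A \<in> carrier_mat n n" and A_symmetric: "transpose_mat A = A"
    and eigenvector_w: "\<And>k. k < n \<Longrightarrow> eigenvector A (w k) (ev k)"
    and inj_on_ev: "inj_on ev {..<n}"
begin

lemma w_carrier: "k < n \<Longrightarrow> w k \<in> carrier_vec n"
  using eigenvector_w A_carrier unfolding eigenvector_def by auto

lemma A_mult_w: "k < n \<Longrightarrow> A *\<^sub>v w k = ev k \<cdot>\<^sub>v w k"
  using eigenvector_w unfolding eigenvector_def by auto

lemma w_orthogonal: "k < n \<Longrightarrow> l < n \<Longrightarrow> k \<noteq> l \<Longrightarrow> w k \<bullet> w l = 0"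
  using symmetric_eigenvectors_orthogonal[OF A_carrier A_symmetric eigenvector_w eigenvector_w]
    inj_on_ev by (auto simp: inj_on_def)

lemma w_square_pos: "k < n \<Longrightarrow> w k \<bullet> w k > 0"
  using eigenvector_w[of k] conjugate_square_greater_0_vec[OF w_carrier, of k]
  unfolding eigenvector_def by (simp add: carrier_matD(1)[OF A_carrier])

definition eigenbasis_mat :: "real mat" where
  "eigenbasis_mat = mat n n (\<lambda>(j, k). w k $ j)"

definition coordinate_mat :: "real mat" where
  "coordinate_mat = mat n n (\<lambda>(k, j). w k $ j / (w k \<bullet> w k))"

lemma eigenbasis_mat_carrier [simp]: "eigenbasis_mat \<in> carrier_mat n n"
  by (simp add: eigenbasis_mat_def)

lemma coordinate_mat_carrier [simp]: "coordinate_mat \<in> carrier_mat n n"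
  by (simp add: coordinate_mat_def)

lemma eigenbasis_mat_dim [simp]: "dim_row eigenbasis_mat = n" "dim_col eigenbasis_mat = n"
  by (simp_all add: eigenbasis_mat_def)

lemma coordinate_mat_dim [simp]: "dim_row coordinate_mat = n" "dim_col coordinate_mat = n"
  by (simp_all add: coordinate_mat_def)

lemma col_eigenbasis_mat: "k < n \<Longrightarrow> col eigenbasis_mat k = w k"
  by (rule eq_vecI) (auto simp: eigenbasis_mat_def w_carrier[THEN carrier_vecD])

lemma coordinate_mat_eigenbasis_mat: "coordinate_mat * eigenbasis_mat = 1\<^sub>m n"
proof (rule eq_matI)
  fix k l assume "k < dim_row (1\<^sub>m n :: real mat)" "l < dim_col (1\<^sub>m n :: real mat)"
  then have kl: "k < n" "l < n" by auto
  have "row coordinate_mat k = (1 / (w k \<bullet> w k)) \<cdot>\<^sub>v w k"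
    using kl by (intro eq_vecI) (auto simp: coordinate_mat_def w_carrier[THEN carrier_vecD])
  then have "(coordinate_mat * eigenbasis_mat) $$ (k, l) = (w k \<bullet> w l) / (w k \<bullet> w k)"
    using kl w_carrier[OF kl(1)] w_carrier[OF kl(2)] by (simp add: col_eigenbasis_mat)
  also have "\<dots> = (1\<^sub>m n :: real mat) $$ (k, l)"
    using w_orthogonal w_square_pos[of k] kl by (cases "k = l") auto
  finally show "(coordinate_mat * eigenbasis_mat) $$ (k, l) = (1\<^sub>m n :: real mat) $$ (k, l)" .
qed auto

lemma eigenbasis_expansion: "u \<in> carrier_vec n \<Longrightarrow> eigenbasis_mat *\<^sub>v (coordinate_mat *\<^sub>v u) = u"
  using mat_mult_left_right_inverse[OF coordinate_mat_carrier eigenbasis_mat_carrier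
      coordinate_mat_eigenbasis_mat]
  by (simp flip: assoc_mult_mat_vec[of _ n n _ n])

lemma A_mult_eigenbasis_mat:
  assumes c: "c \<in> carrier_vec n"
  shows "A *\<^sub>v (eigenbasis_mat *\<^sub>v c) = eigenbasis_mat *\<^sub>v vec n (\<lambda>k. ev k * c $ k)"
proof -
  define D where "D = mat n n (\<lambda>(k, l). if k = l then ev k else 0)"
  have D: "D \<in> carrier_mat n n" by (simp add: D_def)
  have AV: "A * eigenbasis_mat = eigenbasis_mat * D"
  proof (rule eq_matI)
    fix i k assume "i < dim_row (eigenbasis_mat * D)" "k < dim_col (eigenbasis_mat * D)"
    then have ik: "i < n" "k < n" by (auto simp: D_def)
    have "(A * eigenbasis_mat) $$ (i, k) = (A *\<^sub>v w k) $ i"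
      using ik A_carrier by (simp add: col_eigenbasis_mat)
    also have "\<dots> = row eigenbasis_mat i \<bullet> col D k"
      using ik w_carrier[of k] by (simp add: A_mult_w scalar_prod_def D_def eigenbasis_mat_def
          sum.delta' if_distrib cong: if_cong)
    finally show "(A * eigenbasis_mat) $$ (i, k) = (eigenbasis_mat * D) $$ (i, k)"
      using ik D by simp
  qed (use A_carrier D in auto)
  have Dc: "D *\<^sub>v c = vec n (\<lambda>k. ev k * c $ k)"
  proof (rule eq_vecI)
    fix k assume "k < dim_vec (vec n (\<lambda>k. ev k * c $ k))"
    then have k: "k < n" by simp
    have "row D k = ev k \<cdot>\<^sub>v unit_vec n k"
      using k by (intro eq_vecI) (auto simp: D_def unit_vec_def)
    then show "(D *\<^sub>v c) $ k = vec n (\<lambda>k. ev k * c $ k) $ k" using k c D by simp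
  qed (simp add: D_def)
  have "A *\<^sub>v (eigenbasis_mat *\<^sub>v c) = (A * eigenbasis_mat) *\<^sub>v c"
    using assoc_mult_mat_vec[OF A_carrier eigenbasis_mat_carrier c] by simp
  also have "\<dots> = eigenbasis_mat *\<^sub>v (D *\<^sub>v c)"
    unfolding AV using assoc_mult_mat_vec[OF eigenbasis_mat_carrier D c] .
  finally show ?thesis unfolding Dc .
qed

lemma shift_prod_vec_eigenbasis_mat:
  assumes c: "c \<in> carrier_vec n"
  shows "shift_prod_vec A ms (eigenbasis_mat *\<^sub>v c)
    = eigenbasis_mat *\<^sub>v vec n (\<lambda>k. c $ k * prod_list (map (\<lambda>\<mu>. ev k - \<mu>) ms))"
proof (induction ms)
  case (Cons \<mu> ms)
  define c' where "c' = vec n (\<lambda>k. c $ k * prod_list (map (\<lambda>\<mu>. ev k - \<mu>) ms))"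
  have c': "c' \<in> carrier_vec n" by (simp add: c'_def)
  have "shift_prod_vec A (\<mu> # ms) (eigenbasis_mat *\<^sub>v c)
      = eigenbasis_mat *\<^sub>v vec n (\<lambda>k. ev k * c' $ k) - eigenbasis_mat *\<^sub>v (\<mu> \<cdot>\<^sub>v c')"
    using Cons A_mult_eigenbasis_mat[OF c'] mult_mat_vec[OF eigenbasis_mat_carrier c']
    by (simp add: c'_def)
  also have "\<dots> = eigenbasis_mat *\<^sub>v (vec n (\<lambda>k. ev k * c' $ k) - \<mu> \<cdot>\<^sub>v c')"
    using c' by (simp add: mult_minus_distrib_mat_vec[OF eigenbasis_mat_carrier])
  also have "vec n (\<lambda>k. ev k * c' $ k) - \<mu> \<cdot>\<^sub>v c'
      = vec n (\<lambda>k. c $ k * prod_list (map (\<lambda>\<mu>. ev k - \<mu>) (\<mu> # ms)))"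
    by (rule eq_vecI) (auto simp: c'_def algebra_simps)
  finally show ?case .
next
  case Nil
  have "vec n (($) c) = c" using c by (auto simp: vec_eq_iff)
  then show ?case by simp
qed

text \<open>Applying \<open>\<Prod>\<^sub>l\<^sub>\<noteq>\<^sub>k (A - ev l)\<close> to \<open>u\<close> isolates its \<open>k\<close>-th eigencomponent; being a
  polynomial of degree \<open>n - 1\<close> in \<open>A\<close>, it keeps the coordinates in \<open>P\<close> zero.\<close>

lemma krylov_zero_on_imp_eigenvector:
  assumes P: "P \<subseteq> {..<n}" and u: "u \<in> carrier_vec n" "u \<noteq> 0\<^sub>v n"
    and Z: "krylov_zero_on A P n u"
  shows "\<exists>k<n. \<forall>p\<in>P. w k $ p = 0"
proof -
  define c where "c = coordinate_mat *\<^sub>v u"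
  have c: "c \<in> carrier_vec n"
    unfolding c_def using coordinate_mat_carrier u(1) by (rule mult_mat_vec_carrier)
  have u_eq: "u = eigenbasis_mat *\<^sub>v c" unfolding c_def using eigenbasis_expansion[OF u(1)] by simp
  obtain k where k: "k < n" "c $ k \<noteq> 0"
  proof (rule ccontr)
    assume "\<not> thesis"
    then have "c = 0\<^sub>v n" using c that by (auto simp: vec_eq_iff)
    then have "u = 0\<^sub>v n" using u_eq by (auto intro!: eq_vecI simp: scalar_prod_def)
    then show False using u(2) by simp
  qed
  define ms where "ms = map ev ([0..<k] @ [Suc k..<n])"
  define e where "e = c $ k * prod_list (map (\<lambda>\<mu>. ev k - \<mu>) ms)"
  have "ev k \<notin> set ms" using k(1) by (auto simp: ms_def dest: inj_onD[OF inj_on_ev])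
  then have e: "e \<noteq> 0" using k(2) by (auto simp: e_def prod_list_zero_iff)
  have "ev l \<in> set ms" if "l < n" "l \<noteq> k" for l
    using that by (cases "l < k") (auto simp: ms_def)
  then have "vec n (\<lambda>l. c $ l * prod_list (map (\<lambda>\<mu>. ev l - \<mu>) ms)) = e \<cdot>\<^sub>v unit_vec n k"
    by (intro eq_vecI) (auto simp: e_def prod_list_zero_iff unit_vec_def)
  then have filtered: "shift_prod_vec A ms u = e \<cdot>\<^sub>v w k"
    using u_eq shift_prod_vec_eigenbasis_mat[OF c] mult_mat_vec[OF eigenbasis_mat_carrier]
      mult_unit_vec_eq_col[OF eigenbasis_mat_carrier k(1)] col_eigenbasis_mat[OF k(1)] by simp
  have "krylov_zero_on A P 1 (shift_prod_vec A ms u)"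
    using krylov_zero_on_shift_prod_vec[OF A_carrier u(1) P, of 1 ms] Z k(1)
    by (simp add: ms_def)
  then have "\<forall>p\<in>P. (e \<cdot>\<^sub>v w k) $ p = 0"
    using filtered A_carrier w_carrier[OF k(1)] unfolding krylov_zero_on_def by auto
  then show ?thesis using e k(1) P w_carrier[OF k(1)] by (auto simp: subset_iff)
qed

end

section \<open>Kalman matrices of a symmetric system\<close>

lemma pow_mat_commute:
  assumes "A \<in> carrier_mat n n"
  shows "A * A ^\<^sub>m k = A ^\<^sub>m k * A"
proof (induction k)
  case (Suc k)
  have "A * A ^\<^sub>m Suc k = (A * A ^\<^sub>m k) * A"
    using assms by (simp add: assoc_mult_mat[of _ n n _ n _ n])
  then show ?case using Suc by simp
qed (use assms in simp)

lemma transpose_pow_mat_symmetric: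
  fixes A :: "'a :: comm_semiring_1 mat"
  assumes "A \<in> carrier_mat n n" "transpose_mat A = A"
  shows "transpose_mat (A ^\<^sub>m k) = A ^\<^sub>m k"
proof (induction k)
  case (Suc k)
  have "transpose_mat (A ^\<^sub>m Suc k) = transpose_mat A * transpose_mat (A ^\<^sub>m k)"
    using transpose_mult[OF pow_carrier_mat[OF assms(1), of k] assms(1)] by simp
  then show ?case using Suc assms pow_mat_commute[OF assms(1)] by simp
qed (use assms in simp)

lemma ctrb_mat_eq_transpose_obsv_mat:
  assumes A: "A \<in> carrier_mat n n" "transpose_mat A = A" and B: "B \<in> carrier_mat n m"
  shows "ctrb_mat A B = transpose_mat (obsv_mat A (transpose_mat B))"
proof (rule eq_matI)
  fix i j
  assume "i < dim_row (transpose_mat (obsv_mat A (transpose_mat B)))"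
    "j < dim_col (transpose_mat (obsv_mat A (transpose_mat B)))"
  then have ij: "i < n" "j < m * n" using A B by (auto simp: obsv_mat_def)
  have "transpose_mat B * A ^\<^sub>m (j div m) = transpose_mat (A ^\<^sub>m (j div m) * B)"
    using A B by (simp add: transpose_mult[of _ n n _ m] transpose_pow_mat_symmetric)
  moreover have "j mod m < m" using ij(2) by (cases m) auto
  ultimately show "ctrb_mat A B $$ (i, j) = transpose_mat (obsv_mat A (transpose_mat B)) $$ (i, j)"
    using ij A B by (simp add: ctrb_mat_def obsv_mat_def mult.commute)
qed (use A B in \<open>auto simp: ctrb_mat_def obsv_mat_def\<close>)

lemma input_mat_carrier: "input_mat n is \<in> carrier_mat n (length is)"
  by (simp add: input_mat_def)

lemma col_input_mat:
  "r < length is \<Longrightarrow> is ! r - 1 < n \<Longrightarrow> col (input_mat n is) r = unit_vec n (is ! r - 1)"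
  by (rule eq_vecI) (auto simp: input_mat_def unit_vec_def)

lemma obsv_mat_input_mult_vec:
  assumes A: "A \<in> carrier_mat n n" and "is": "set is \<subseteq> {1..n}" and u: "u \<in> carrier_vec n"
    and i: "i < length is * n"
  shows "(obsv_mat A (transpose_mat (input_mat n is)) *\<^sub>v u) $ i
    = (A ^\<^sub>m (i div length is) *\<^sub>v u) $ (is ! (i mod length is) - 1)"
proof -
  let ?m = "length is" and ?O = "obsv_mat A (transpose_mat (input_mat n is))"
  let ?r = "i mod ?m" and ?k = "i div ?m"
  have r: "?r < ?m" using i by (cases ?m) auto
  then have p: "is ! ?r - 1 < n" using "is" nth_mem[OF r] by fastforce
  have "row ?O i = row (A ^\<^sub>m ?k) (is ! ?r - 1)"
  proof (rule eq_vecI)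
    fix j assume "j < dim_vec (row (A ^\<^sub>m ?k) (is ! ?r - 1))"
    then have j: "j < n" using A by (auto split: if_splits)
    have "row ?O i $ j = col (input_mat n is) ?r \<bullet> col (A ^\<^sub>m ?k) j"
      using i j r A by (simp add: obsv_mat_def input_mat_def)
    also have "\<dots> = row (A ^\<^sub>m ?k) (is ! ?r - 1) $ j"
      using r p j A by (simp add: col_input_mat)
    finally show "row ?O i $ j = row (A ^\<^sub>m ?k) (is ! ?r - 1) $ j" .
  qed (use A in \<open>simp add: obsv_mat_def input_mat_def\<close>)
  then show ?thesis using i p A by (simp add: obsv_mat_def input_mat_def)
qed

lemma all_less_mult_div_mod_iff:
  fixes m n :: nat
  shows "(\<forall>i<m * n. P (i div m) (i mod m)) \<longleftrightarrow> (\<forall>j<n. \<forall>r<m. P j r)"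
proof (intro iffI allI impI)
  fix j r assume all: "\<forall>i<m * n. P (i div m) (i mod m)" and jr: "j < n" "r < m"
  have "r + j * m < Suc j * m" using jr(2) by simp
  also have "\<dots> \<le> n * m" using jr(1) by (intro mult_le_mono1) simp
  also have "\<dots> = m * n" by (rule mult.commute)
  finally have "P ((r + j * m) div m) ((r + j * m) mod m)" using all by blast
  then show "P j r" using jr(2) by simp
next
  fix i assume all: "\<forall>j<n. \<forall>r<m. P j r" and i: "i < m * n"
  then have "0 < m" by (cases m) auto
  then have "i div m < n" "i mod m < m"
    using i by (simp_all add: div_less_iff_less_mult mult.commute)
  then show "P (i div m) (i mod m)" using all by blast
qed

lemma obsv_mat_input_kernel_iff:
  assumes A: "A \<in> carrier_mat n n" and "is": "set is \<subseteq> {1..n}" and u: "u \<in> carrier_vec n"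
  shows "obsv_mat A (transpose_mat (input_mat n is)) *\<^sub>v u = 0\<^sub>v (length is * n)
    \<longleftrightarrow> krylov_zero_on A ((\<lambda>i. i - 1) ` set is) n u"
proof -
  let ?m = "length is"
  have "dim_vec (obsv_mat A (transpose_mat (input_mat n is)) *\<^sub>v u) = ?m * n"
    using A by (simp add: obsv_mat_def input_mat_def)
  then have "obsv_mat A (transpose_mat (input_mat n is)) *\<^sub>v u = 0\<^sub>v (?m * n)
      \<longleftrightarrow> (\<forall>i<?m * n. (A ^\<^sub>m (i div ?m) *\<^sub>v u) $ (is ! (i mod ?m) - 1) = 0)"
    using obsv_mat_input_mult_vec[OF A "is" u] by (auto simp: vec_eq_iff)
  also have "\<dots> \<longleftrightarrow> (\<forall>j<n. \<forall>r<?m. (A ^\<^sub>m j *\<^sub>v u) $ (is ! r - 1) = 0)"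
    by (rule all_less_mult_div_mod_iff)
  also have "\<dots> \<longleftrightarrow> krylov_zero_on A ((\<lambda>i. i - 1) ` set is) n u"
    by (fastforce simp: krylov_zero_on_def in_set_conv_nth)
  finally show ?thesis .
qed

section \<open>Chebyshev-type recurrences and tridiagonal matrices\<close>

text \<open>With \<open>t = 1 - x / 2\<close>, \<open>cheb_seq 0 x (j + 1) = U\<^sub>j t\<close> and \<open>cheb_seq 1 x (j + 1) = V\<^sub>j t\<close> are the
  Chebyshev polynomials of the second and third kind.\<close>

fun cheb_seq :: "real \<Rightarrow> real \<Rightarrow> nat \<Rightarrow> real" where
  "cheb_seq a x 0 = a"
| "cheb_seq a x (Suc 0) = 1"
| "cheb_seq a x (Suc (Suc j)) = (2 - x) * cheb_seq a x (Suc j) - cheb_seq a x j"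

lemma cheb_seq_rec: "cheb_seq a x (j + 2) = (2 - x) * cheb_seq a x (j + 1) - cheb_seq a x j"
  by (simp add: numeral_2_eq_2)

lemma three_term_unique:
  fixes f g :: "nat \<Rightarrow> real" and j N :: nat
  assumes f: "\<And>j. j + 2 \<le> N \<Longrightarrow> f (j + 2) = (2 - x) * f (j + 1) - f j"
    and g: "\<And>j. j + 2 \<le> N \<Longrightarrow> g (j + 2) = (2 - x) * g (j + 1) - g j"
    and "f 0 = g 0" "f 1 = g 1"
  shows "j \<le> N \<Longrightarrow> f j = g j"
proof (induction j rule: less_induct)
  case (less j)
  show ?case
  proof (cases "j < 2")
    case False
    then obtain i where j: "j = i + 2" by (metis add.commute le_Suc_ex not_less)
    then have "f i = g i" "f (i + 1) = g (i + 1)" using less by auto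
    then show ?thesis using f[of i] g[of i] less.prems j by simp
  qed (use assms in \<open>auto simp: less_2_cases_iff\<close>)
qed

lemma three_term_eq_cheb_seq:
  fixes f :: "nat \<Rightarrow> real" and j N :: nat
  assumes "\<And>j. j + 2 \<le> N \<Longrightarrow> f (j + 2) = (2 - x) * f (j + 1) - f j"
    and "f 0 = a * f 1" and "j \<le> N"
  shows "f j = f 1 * cheb_seq a x j"
  by (rule three_term_unique[where g = "\<lambda>j. f 1 * cheb_seq a x j"])
    (use assms in \<open>auto simp: cheb_seq_rec algebra_simps\<close>)

lemma cheb_seq_Suc: "cheb_seq a x (Suc j) = cheb_seq 0 x (Suc j) - a * cheb_seq 0 x j"
  by (rule three_term_unique[where f = "\<lambda>j. cheb_seq a x (Suc j)" and N = j])
    (auto simp: cheb_seq_rec algebra_simps)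

lemma cheb_seq_shift:
  assumes "cheb_seq a x p = 0"
  shows "cheb_seq a x (p + j) = cheb_seq a x (Suc p) * cheb_seq 0 x j"
  using three_term_eq_cheb_seq[where f = "\<lambda>i. cheb_seq a x (p + i)" and a = 0 and N = j]
  by (simp add: assms cheb_seq_rec add.assoc[symmetric])

lemma cheb_seq_Suc_nonzero: "cheb_seq a x p = 0 \<Longrightarrow> cheb_seq a x (Suc p) \<noteq> 0"
proof (induction p)
  case (Suc p)
  then show ?case by (cases p) auto
qed simp

lemma cheb_seq_zero_step:
  assumes "cheb_seq a x p = 0" "p < q"
  shows "cheb_seq a x q = 0 \<longleftrightarrow> cheb_seq 0 x (q - p) = 0"
  using cheb_seq_shift[OF assms(1), of "q - p"] cheb_seq_Suc_nonzero[OF assms(1)] assms(2) by simp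

lemma cheb_seq_zero_boundary:
  assumes "cheb_seq a x p = 0" "p \<le> n"
  shows "cheb_seq a x (Suc n) = cheb_seq a x n \<longleftrightarrow> cheb_seq 1 x (Suc (n - p)) = 0"
proof -
  define q where "q = n - p"
  have "cheb_seq a x (Suc n) - cheb_seq a x n
      = cheb_seq a x (Suc p) * (cheb_seq 0 x (Suc q) - cheb_seq 0 x q)"
    using cheb_seq_shift[OF assms(1), of q] cheb_seq_shift[OF assms(1), of "Suc q"] assms(2)
    by (simp add: q_def right_diff_distrib)
  also have "cheb_seq 0 x (Suc q) - cheb_seq 0 x q = cheb_seq 1 x (Suc q)"
    by (simp add: cheb_seq_Suc[of 1])
  finally show ?thesis
    using cheb_seq_Suc_nonzero[OF assms(1)] by (metis q_def mult_eq_0_iff right_minus_eq)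
qed

lemma cheb_seq_zeros_sorted_iff:
  assumes "sorted_wrt (<) (p # ps)" "cheb_seq a x p = 0"
  shows "(\<forall>q\<in>set ps. cheb_seq a x q = 0) \<longleftrightarrow>
    (\<forall>k<length ps. cheb_seq 0 x (ps ! k - (p # ps) ! k) = 0)"
  using assms
proof (induction ps arbitrary: p)
  case (Cons q qs)
  have step: "cheb_seq a x q = 0 \<longleftrightarrow> cheb_seq 0 x (q - p) = 0"
    using cheb_seq_zero_step[OF Cons.prems(2)] Cons.prems(1) by simp
  have "(\<forall>k<length (q # qs). cheb_seq 0 x ((q # qs) ! k - (p # q # qs) ! k) = 0) \<longleftrightarrow>
    cheb_seq 0 x (q - p) = 0 \<and> (\<forall>k<length qs. cheb_seq 0 x (qs ! k - (q # qs) ! k) = 0)"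
    by (auto simp: less_Suc_eq_0_disj)
  then show ?case using Cons.IH[of q] Cons.prems(1) step by auto
qed simp

definition tridiag :: "nat \<Rightarrow> real \<Rightarrow> real \<Rightarrow> real mat" where
  "tridiag N a b = mat N N (\<lambda>(i, j).
     if i = j then 2 - (if i = 0 then a else 0) - (if i + 1 = N then b else 0)
     else if i + 1 = j \<or> j + 1 = i then -1 else 0)"

lemma tridiag_carrier [simp]: "tridiag N a b \<in> carrier_mat N N"
  by (simp add: tridiag_def)

lemma tridiag_dim [simp]: "dim_row (tridiag N a b) = N" "dim_col (tridiag N a b) = N"
  by (simp_all add: tridiag_def)

lemma path_laplacian_tridiag: "path_laplacian n = tridiag n 1 1"
  unfolding path_laplacian_def tridiag_def by (rule eq_matI) auto

lemma N_mat_tridiag: "N_mat \<nu> = tridiag \<nu> 1 0"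
  unfolding N_mat_def tridiag_def by (rule eq_matI) auto

lemma M_mat_tridiag: "M_mat \<mu> = tridiag \<mu> 0 0"
  unfolding M_mat_def tridiag_def by (rule eq_matI) auto

text \<open>\<open>ghost_ext a b w\<close> is \<open>w\<close> shifted by one index and extended by the ghost values \<open>a w\<^sub>0\<close>
  on the left and \<open>b w\<^sub>N\<^sub>-\<^sub>1\<close> on the right; with them every row of \<open>tridiag N a b\<close> is the plain
  second difference.\<close>

definition ghost_ext :: "real \<Rightarrow> real \<Rightarrow> real vec \<Rightarrow> nat \<Rightarrow> real" where
  "ghost_ext a b w j =
     (if j = 0 then a * w $ 0 else if j \<le> dim_vec w then w $ (j - 1) else b * w $ (dim_vec w - 1))"

lemma tridiag_mult_vec:
  assumes w: "w \<in> carrier_vec N" and i: "i < N"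
  shows "(tridiag N a b *\<^sub>v w) $ i =
    2 * ghost_ext a b w (i + 1) - ghost_ext a b w i - ghost_ext a b w (i + 2)"
proof -
  let ?T = "tridiag N a b"
  have "(?T *\<^sub>v w) $ i = (\<Sum>j\<in>{0..<N}. ?T $$ (i, j) * w $ j)"
    using w i by (simp add: scalar_prod_def row_def)
  also have "\<dots> = (\<Sum>j\<in>{0..<N}. (if j = i then ?T $$ (i, i) * w $ i else 0)
      + (if 0 < i \<and> j = i - 1 then - w $ (i - 1) else 0)
      + (if j = i + 1 then - w $ (i + 1) else 0))"
    by (rule sum.cong) (use i in \<open>auto simp: tridiag_def\<close>)
  also have "\<dots> = ?T $$ (i, i) * w $ i - (if 0 < i then w $ (i - 1) else 0)
      - (if i + 1 < N then w $ (i + 1) else 0)"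
    using i by (auto simp: sum.distrib sum.delta' split: if_splits)
  also have "\<dots> = 2 * ghost_ext a b w (i + 1) - ghost_ext a b w i - ghost_ext a b w (i + 2)"
    using i w by (cases "i + 1 = N") (auto simp: tridiag_def ghost_ext_def algebra_simps)
  finally show ?thesis .
qed

lemma tridiag_eigen_row_iff:
  assumes "w \<in> carrier_vec N" "i < N"
  shows "(tridiag N a b *\<^sub>v w) $ i = x * w $ i \<longleftrightarrow>
    ghost_ext a b w (i + 2) = (2 - x) * ghost_ext a b w (i + 1) - ghost_ext a b w i"
proof -
  have wi: "w $ i = ghost_ext a b w (i + 1)" using assms by (simp add: ghost_ext_def)
  show ?thesis unfolding tridiag_mult_vec[OF assms] wi left_diff_distrib by argo
qed

definition cheb_vec :: "nat \<Rightarrow> real \<Rightarrow> real \<Rightarrow> real vec" where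
  "cheb_vec N a x = vec N (\<lambda>j. cheb_seq a x (Suc j))"

lemma tridiag_eigenvector_cheb_vec:
  assumes "eigenvector (tridiag N a b) w x"
  shows "0 < N" "w $ 0 \<noteq> 0" "w = w $ 0 \<cdot>\<^sub>v cheb_vec N a x"
    and "cheb_seq a x (Suc N) = b * cheb_seq a x N"
proof -
  have w: "w \<in> carrier_vec N" "w \<noteq> 0\<^sub>v N" and eq: "tridiag N a b *\<^sub>v w = x \<cdot>\<^sub>v w"
    using assms unfolding eigenvector_def by auto
  show N: "0 < N" using w by (cases N) auto
  define g where "g = ghost_ext a b w"
  have gw: "g (Suc i) = w $ i" if "i < N" for i
    using that w by (simp add: g_def ghost_ext_def)
  have rec: "g (j + 2) = (2 - x) * g (j + 1) - g j" if "j + 2 \<le> N + 1" for j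
  proof -
    have "(tridiag N a b *\<^sub>v w) $ j = x * w $ j" using eq that w(1) by simp
    then show ?thesis using tridiag_eigen_row_iff[OF w(1), of j a b x] that by (simp add: g_def)
  qed
  have "g 0 = a * g 1" using N w by (simp add: g_def ghost_ext_def)
  then have sol: "g j = w $ 0 * cheb_seq a x j" if "j \<le> N + 1" for j
    using three_term_eq_cheb_seq[OF rec _ that] gw[OF N] by simp
  show w_eq: "w = w $ 0 \<cdot>\<^sub>v cheb_vec N a x"
  proof (rule eq_vecI)
    fix i assume "i < dim_vec (w $ 0 \<cdot>\<^sub>v cheb_vec N a x)"
    then have "i < N" by (simp add: cheb_vec_def)
    then show "w $ i = (w $ 0 \<cdot>\<^sub>v cheb_vec N a x) $ i"
      using sol[of "Suc i"] gw[of i] by (simp add: cheb_vec_def)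
  qed (use w(1) in \<open>simp add: cheb_vec_def\<close>)
  show w0: "w $ 0 \<noteq> 0"
  proof
    assume "w $ 0 = 0"
    then have "w = 0\<^sub>v N" by (subst w_eq) (auto simp: cheb_vec_def)
    then show False using w(2) by simp
  qed
  have "g (N + 1) = b * g N" using N w by (simp add: g_def ghost_ext_def)
  then show "cheb_seq a x (Suc N) = b * cheb_seq a x N" using sol[of "N + 1"] sol[of N] w0 by simp
qed

lemma cheb_vec_eigenvector:
  assumes "0 < N" and "cheb_seq a x (Suc N) = b * cheb_seq a x N"
  shows "eigenvector (tridiag N a b) (cheb_vec N a x) x"
proof -
  let ?v = "cheb_vec N a x"
  have g: "ghost_ext a b ?v j = cheb_seq a x j" if "j \<le> N + 1" for j
    using that assms by (auto simp: ghost_ext_def cheb_vec_def le_Suc_eq)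
  have "(tridiag N a b *\<^sub>v ?v) $ i = x * ?v $ i" if "i < N" for i
    using tridiag_eigen_row_iff[of ?v N i a b x] that g by (simp add: cheb_vec_def cheb_seq_rec)
  moreover have "?v \<noteq> 0\<^sub>v N" using assms(1) by (auto simp: cheb_vec_def vec_eq_iff)
  ultimately show ?thesis
    unfolding eigenvector_def by (auto simp: cheb_vec_def vec_eq_iff)
qed

lemma eigenvalue_tridiag_iff:
  "eigenvalue (tridiag N a b) x \<longleftrightarrow> 0 < N \<and> cheb_seq a x (Suc N) = b * cheb_seq a x N"
  unfolding eigenvalue_def
  using tridiag_eigenvector_cheb_vec(1,4) cheb_vec_eigenvector by blast

lemma eigenvalue_M_mat_iff: "eigenvalue (M_mat \<mu>) x \<longleftrightarrow> cheb_seq 0 x (Suc \<mu>) = 0"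
  unfolding M_mat_tridiag eigenvalue_tridiag_iff by (cases \<mu>) auto

lemma eigenvalue_N_mat_iff: "eigenvalue (N_mat \<nu>) x \<longleftrightarrow> cheb_seq 1 x (Suc \<nu>) = 0"
  unfolding N_mat_tridiag eigenvalue_tridiag_iff by (cases \<nu>) auto

section \<open>The path graph\<close>

lemma unreachable_eigenvalue_iff:
  assumes "Io \<subseteq> {1..n}"
  shows "unreachable_eigenvalue n Io x \<longleftrightarrow>
    0 < n \<and> cheb_seq 1 x (Suc n) = cheb_seq 1 x n \<and> (\<forall>i\<in>Io. cheb_seq 1 x i = 0)"
proof
  assume "unreachable_eigenvalue n Io x"
  then obtain v where v: "eigenvector (tridiag n 1 1) v x" and zero: "\<forall>i\<in>Io. v $ (i - 1) = 0"
    unfolding unreachable_eigenvalue_def path_laplacian_tridiag by blast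
  note cheb = tridiag_eigenvector_cheb_vec[OF v]
  have "cheb_seq 1 x i = 0" if "i \<in> Io" for i
  proof -
    have "0 = v $ (i - 1)" using zero that by simp
    also have "\<dots> = v $ 0 * cheb_seq 1 x i"
    proof -
      have "1 \<le> i" "i \<le> n" using that assms by auto
      then show ?thesis by (subst cheb(3)) (auto simp: cheb_vec_def)
    qed
    finally show ?thesis using cheb(2) by simp
  qed
  then show "0 < n \<and> cheb_seq 1 x (Suc n) = cheb_seq 1 x n \<and> (\<forall>i\<in>Io. cheb_seq 1 x i = 0)"
    using cheb(1,4) by simp
next
  assume "0 < n \<and> cheb_seq 1 x (Suc n) = cheb_seq 1 x n \<and> (\<forall>i\<in>Io. cheb_seq 1 x i = 0)"
  then have "eigenvector (path_laplacian n) (cheb_vec n 1 x) x"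
    and "\<forall>i\<in>Io. cheb_vec n 1 x $ (i - 1) = 0"
    using assms cheb_vec_eigenvector[of n 1 x 1]
    by (auto simp: path_laplacian_tridiag cheb_vec_def Suc_diff_le subset_iff)
  then show "unreachable_eigenvalue n Io x" unfolding unreachable_eigenvalue_def by blast
qed

lemma common_eigenvalue_iff:
  assumes "is \<noteq> []" "sorted_wrt (<) is" "set is \<subseteq> {1..n}"
  shows "common_eigenvalue n is x \<longleftrightarrow>
    0 < n \<and> cheb_seq 1 x (Suc n) = cheb_seq 1 x n \<and> (\<forall>i\<in>set is. cheb_seq 1 x i = 0)"
proof -
  obtain p ps where is_Cons: "is = p # ps" using assms(1) by (cases "is") auto
  have p: "1 \<le> p" "p \<le> n" using assms(3) is_Cons by auto
  have last: "last is \<in> set is" using assms(1) by simp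
  then have "last is \<le> n" using assms(3) by auto
  have gap: "Suc (is ! (k + 1) - is ! k - 1) = ps ! k - (p # ps) ! k" if "k < length ps" for k
  proof -
    have "is ! k < is ! (k + 1)"
      using sorted_wrt_nth_less[OF assms(2), of k "k + 1"] that by (simp add: is_Cons)
    then show ?thesis by (simp add: is_Cons)
  qed
  have "common_eigenvalue n is x \<longleftrightarrow> cheb_seq 1 x p = 0
      \<and> (\<forall>k<length ps. cheb_seq 0 x (ps ! k - (p # ps) ! k) = 0)
      \<and> cheb_seq 1 x (Suc (n - last is)) = 0"
    unfolding common_eigenvalue_def eigenvalue_M_mat_iff eigenvalue_N_mat_iff
    using p gap by (simp add: is_Cons)
  also have "\<dots> \<longleftrightarrow> (\<forall>i\<in>set is. cheb_seq 1 x i = 0) \<and> cheb_seq 1 x (Suc n) = cheb_seq 1 x n"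
    using cheb_seq_zeros_sorted_iff[of p ps 1 x] cheb_seq_zero_boundary[of 1 x "last is" n] assms(2)
      last \<open>last is \<le> n\<close> by (auto simp: is_Cons)
  finally show ?thesis using p by auto
qed

lemma cheb_seq_one_cos: "cheb_seq 1 (2 - 2 * cos (2 * t)) j * cos t = cos ((2 * real j - 1) * t)"
proof (induction j rule: less_induct)
  case (less j)
  show ?case
  proof (cases "j < 2")
    case False
    then obtain i where j: "j = i + 2" by (metis add.commute le_Suc_ex not_less)
    let ?u = "(2 * real i + 1) * t"
    have "cos (?u + 2 * t) = 2 * cos (2 * t) * cos ?u - cos (?u - 2 * t)"
      by (simp add: cos_add cos_diff)
    moreover have "?u + 2 * t = (2 * real j - 1) * t" "?u - 2 * t = (2 * real i - 1) * t"
      by (simp_all add: j algebra_simps)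
    ultimately show ?thesis
      using less[of i] less[of "i + 1"] by (simp add: j cheb_seq_rec algebra_simps)
  qed (auto simp: less_2_cases_iff)
qed

definition path_eigenvalue :: "nat \<Rightarrow> nat \<Rightarrow> real" where
  "path_eigenvalue n k = 2 - 2 * cos (real k * pi / real n)"

lemma path_eigenvalue_eigenvector:
  assumes "k < n"
  shows "eigenvector (path_laplacian n) (cheb_vec n 1 (path_eigenvalue n k)) (path_eigenvalue n k)"
proof -
  define t where "t = real k * pi / (2 * real n)"
  have eig: "path_eigenvalue n k = 2 - 2 * cos (2 * t)" by (simp add: path_eigenvalue_def t_def)
  have "real k * pi < real n * pi" using assms by simp
  then have "0 \<le> t" "t < pi / 2" using assms by (auto simp: t_def field_simps)
  then have cos_t: "cos t > 0" by (intro cos_gt_zero_pi) auto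
  have kt: "2 * real n * t = real k * pi" using assms by (simp add: t_def)
  have "cheb_seq 1 (path_eigenvalue n k) (Suc n) * cos t = cos (real k * pi + t)"
    unfolding eig cheb_seq_one_cos using kt by (simp add: algebra_simps)
  also have "\<dots> = cos (real k * pi) * cos t" by (simp add: cos_add)
  also have "\<dots> = cos (real k * pi - t)" by (simp add: cos_diff)
  also have "\<dots> = cheb_seq 1 (path_eigenvalue n k) n * cos t"
    unfolding eig cheb_seq_one_cos using kt by (simp add: algebra_simps)
  finally have "cheb_seq 1 (path_eigenvalue n k) (Suc n) = cheb_seq 1 (path_eigenvalue n k) n"
    using cos_t by simp
  then show ?thesis
    using cheb_vec_eigenvector[of n 1 _ 1] assms by (simp add: path_laplacian_tridiag)
qed

lemma inj_on_path_eigenvalue: "inj_on (path_eigenvalue n) {..<n}"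
proof (rule inj_onI)
  fix k l assume "k \<in> {..<n}" "l \<in> {..<n}" and eq: "path_eigenvalue n k = path_eigenvalue n l"
  then have kl: "real k \<le> real n" "real l \<le> real n" "0 < real n" by auto
  have range: "0 \<le> real j * pi / real n \<and> real j * pi / real n \<le> pi" if "real j \<le> real n" for j
    using that kl(3) by (simp add: field_simps)
  have "real k * pi / real n = real l * pi / real n"
    by (rule cos_inj_pi)
      (use range[OF kl(1)] range[OF kl(2)] eq in \<open>auto simp: path_eigenvalue_def\<close>)
  then show "k = l" using kl(3) by simp
qed

lemma path_laplacian_carrier: "path_laplacian n \<in> carrier_mat n n"
  by (simp add: path_laplacian_tridiag)

lemma path_laplacian_symmetric: "transpose_mat (path_laplacian n) = path_laplacian n"
  by (rule eq_matI) (auto simp: path_laplacian_def)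

lemma path_laplacian_eigenbasis:
  "real_symmetric_eigenbasis (path_laplacian n) n (\<lambda>k. cheb_vec n 1 (path_eigenvalue n k))
     (path_eigenvalue n)"
  by unfold_locales (auto simp: path_laplacian_carrier path_laplacian_symmetric
      path_eigenvalue_eigenvector inj_on_path_eigenvalue)

lemma path_krylov_zero_on_iff:
  assumes "Io \<subseteq> {1..n}"
  shows "(\<exists>u\<in>carrier_vec n. u \<noteq> 0\<^sub>v n \<and> krylov_zero_on (path_laplacian n) ((\<lambda>i. i - 1) ` Io) n u)
    \<longleftrightarrow> (\<exists>x. unreachable_eigenvalue n Io x)"
proof -
  have P: "(\<lambda>i. i - 1) ` Io \<subseteq> {..<n}" using assms by (force simp: subset_iff)
  show ?thesis
  proof
    assume "\<exists>u\<in>carrier_vec n. u \<noteq> 0\<^sub>v n \<and> krylov_zero_on (path_laplacian n) ((\<lambda>i. i - 1) ` Io) n u"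
    then obtain u where u: "u \<in> carrier_vec n" "u \<noteq> 0\<^sub>v n"
      and Z: "krylov_zero_on (path_laplacian n) ((\<lambda>i. i - 1) ` Io) n u" by blast
    obtain k where k: "k < n"
      and "\<forall>p\<in>(\<lambda>i. i - 1) ` Io. cheb_vec n 1 (path_eigenvalue n k) $ p = 0"
      using real_symmetric_eigenbasis.krylov_zero_on_imp_eigenvector
          [OF path_laplacian_eigenbasis P u Z] by blast
    then have "unreachable_eigenvalue n Io (path_eigenvalue n k)"
      using path_eigenvalue_eigenvector[OF k] unfolding unreachable_eigenvalue_def by blast
    then show "\<exists>x. unreachable_eigenvalue n Io x" ..
  next
    assume "\<exists>x. unreachable_eigenvalue n Io x"
    then obtain x v where v: "eigenvector (path_laplacian n) v x" "\<forall>i\<in>Io. v $ (i - 1) = 0"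
      unfolding unreachable_eigenvalue_def by blast
    then have "krylov_zero_on (path_laplacian n) ((\<lambda>i. i - 1) ` Io) n v"
      by (intro krylov_zero_on_eigenvector[OF path_laplacian_carrier _ P]) auto
    then show "\<exists>u\<in>carrier_vec n. u \<noteq> 0\<^sub>v n \<and>
        krylov_zero_on (path_laplacian n) ((\<lambda>i. i - 1) ` Io) n u"
      using v(1) carrier_matD(1)[OF path_laplacian_carrier] unfolding eigenvector_def by auto
  qed
qed

lemma obsv_mat_path_input_carrier:
  "obsv_mat (path_laplacian n) (transpose_mat (input_mat n is)) \<in> carrier_mat (length is * n) n"
  unfolding obsv_mat_def carrier_matD(2)[OF path_laplacian_carrier] by (simp add: input_mat_def)

lemma path_reachable_iff:
  assumes "set is \<subseteq> {1..n}"
  shows "reachable (path_laplacian n) (input_mat n is) \<longleftrightarrow>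
    (\<forall>u\<in>carrier_vec n. krylov_zero_on (path_laplacian n) ((\<lambda>i. i - 1) ` set is) n u \<longrightarrow> u = 0\<^sub>v n)"
proof -
  let ?O = "obsv_mat (path_laplacian n) (transpose_mat (input_mat n is))"
  have ctrb: "ctrb_mat (path_laplacian n) (input_mat n is) = transpose_mat ?O"
    by (rule ctrb_mat_eq_transpose_obsv_mat[OF path_laplacian_carrier path_laplacian_symmetric
          input_mat_carrier])
  have "transpose_mat ?O \<in> carrier_mat n (length is * n)"
    using obsv_mat_path_input_carrier by simp
  from vec_space.rank_eq_dim_row_iff[OF this real_scalar_prod_self_eq_0]
  have "reachable (path_laplacian n) (input_mat n is)
      \<longleftrightarrow> (\<forall>u\<in>carrier_vec n. ?O *\<^sub>v u = 0\<^sub>v (length is * n) \<longrightarrow> u = 0\<^sub>v n)"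
    unfolding reachable_def ctrb carrier_matD(1)[OF path_laplacian_carrier] transpose_transpose .
  then show ?thesis using obsv_mat_input_kernel_iff[OF path_laplacian_carrier assms] by simp
qed

lemma path_observable_iff:
  assumes "set is \<subseteq> {1..n}"
  shows "observable (path_laplacian n) (transpose_mat (input_mat n is)) \<longleftrightarrow>
    (\<forall>u\<in>carrier_vec n. krylov_zero_on (path_laplacian n) ((\<lambda>i. i - 1) ` set is) n u \<longrightarrow> u = 0\<^sub>v n)"
proof -
  let ?O = "obsv_mat (path_laplacian n) (transpose_mat (input_mat n is))"
  have "vec_space.rank (length is * n) ?O = n
      \<longleftrightarrow> (\<forall>u\<in>carrier_vec n. ?O *\<^sub>v u = 0\<^sub>v (length is * n) \<longrightarrow> u = 0\<^sub>v n)"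
    by (rule vec_space.rank_eq_dim_col_iff[OF obsv_mat_path_input_carrier])
  then show ?thesis
    unfolding observable_def carrier_matD[OF obsv_mat_path_input_carrier]
      carrier_matD(2)[OF path_laplacian_carrier]
    using obsv_mat_input_kernel_iff[OF path_laplacian_carrier assms] by simp
qed

theorem mainTheorem7:
  fixes n :: nat and "is" :: "nat list"
  assumes "is \<noteq> []" and "sorted_wrt (<) is" and "set is \<subseteq> {1..n}"
  shows "(reachable (path_laplacian n) (input_mat n is) \<longleftrightarrow>
            \<not> (\<exists>x. common_eigenvalue n is x))
       \<and> (observable (path_laplacian n) (transpose_mat (input_mat n is)) \<longleftrightarrow>
            \<not> (\<exists>x. common_eigenvalue n is x))
       \<and> {x. common_eigenvalue n is x} = {x. unreachable_eigenvalue n (set is) x}"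
proof -
  have common_iff: "common_eigenvalue n is x \<longleftrightarrow> unreachable_eigenvalue n (set is) x" for x
    using common_eigenvalue_iff[OF assms] unreachable_eigenvalue_iff[OF assms(3)] by simp
  have "(\<forall>u\<in>carrier_vec n. krylov_zero_on (path_laplacian n) ((\<lambda>i. i - 1) ` set is) n u
      \<longrightarrow> u = 0\<^sub>v n) \<longleftrightarrow> \<not> (\<exists>x. common_eigenvalue n is x)"
    using path_krylov_zero_on_iff[OF assms(3)] common_iff by blast
  then show ?thesis
    using path_reachable_iff[OF assms(3)] path_observable_iff[OF assms(3)] common_iff by simp
qed

end
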